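(* Let $S$ be a supersymmetric numerical semigroup with multiplicity $e$ and blowup $B$. Then ${\rm d}_{\max}(S)=d(F(B)+e;B^{\mathcal D})$.
   Context: $S$ is a numerical semigroup (a submonoid of $\mathbb N$ with finite complement) with minimal generators $e<a_1<\dots<a_t$. An $S$-factorization of $n$ is $(c_0,\dots,c_t)\in\mathbb N^{t+1}$ with $c_0e+\sum c_ia_i=n$, of length $\sum c_i$. ${\rm ord}(n;S)$ is the maximal such length, ${\rm d}_{\max}(n;S)$ is the number of factorizations of maximal length, and ${\rm d}_{\max}(S)=\max_{n\in S}{\rm d}_{\max}(n;S)$. $S$ is additive if ${\rm ord}(u+e;S)={\rm ord}(u;S)+1$ for all $u\in S$. With $\operatorname{Ap}(S;e)=\{w\in S:w-e\notin S\}=\{w_0<w_1<\dots<w_{e-1}\}$, $S$ is supersymmetric if $S$ is additive and, whenever $i+j=e-1$, both $w_i+w_j=w_{e-1}$ and ${\rm ord}(w_i;S)+{\rm ord}(w_j;S)={\rm ord}(w_{e-1};S)$ hold. The blowup is $B=\langle e,d_1,\dots,d_t\rangle$ with $d_i=a_i-e$, and $\mathcal D=(e,d_1,\dots,d_t)$. $d(b;B^{\mathcal D})$ is the number of tuples $(x_0,\dots,x_t)\in\mathbb N^{t+1}$ with $x_0e+\sum x_id_i=b$. $F(B)$ is the largest integer not in $B$. *)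

theory Defs
  imports Main
begin

definition numerical_semigroup :: "nat set \<Rightarrow> bool" where
  "numerical_semigroup S \<longleftrightarrow> 0 \<in> S \<and> (\<forall>x\<in>S. \<forall>y\<in>S. x + y \<in> S) \<and> finite (UNIV - S)"

definition min_gens :: "nat set \<Rightarrow> nat set" where
  "min_gens S = {a \<in> S. a \<noteq> 0 \<and> \<not> (\<exists>x\<in>S. \<exists>y\<in>S. x \<noteq> 0 \<and> y \<noteq> 0 \<and> a = x + y)}"

definition mult :: "nat set \<Rightarrow> nat" where
  "mult S = Min (S - {0})"

definition facts :: "nat set \<Rightarrow> nat \<Rightarrow> (nat \<Rightarrow> nat) set" where
  "facts S n = {c. (\<forall>a. a \<notin> min_gens S \<longrightarrow> c a = 0) \<and> (\<Sum>a\<in>min_gens S. c a * a) = n}"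

definition flen :: "nat set \<Rightarrow> (nat \<Rightarrow> nat) \<Rightarrow> nat" where
  "flen S c = (\<Sum>a\<in>min_gens S. c a)"

definition ord :: "nat \<Rightarrow> nat set \<Rightarrow> nat" where
  "ord n S = Max (flen S ` facts S n)"

definition dmax_at :: "nat \<Rightarrow> nat set \<Rightarrow> nat" where
  "dmax_at n S = card {c \<in> facts S n. flen S c = ord n S}"

definition additive :: "nat set \<Rightarrow> bool" where
  "additive S \<longleftrightarrow> (\<forall>u\<in>S. ord (u + mult S) S = ord u S + 1)"

definition Apery :: "nat set \<Rightarrow> nat \<Rightarrow> nat set" where
  "Apery S e = {w \<in> S. w < e \<or> w - e \<notin> S}"

text \<open>w i = the i-th smallest element of Ap(S;e) (0-indexed).\<close>
definition apw :: "nat set \<Rightarrow> nat \<Rightarrow> nat" where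
  "apw S i = sorted_list_of_set (Apery S (mult S)) ! i"

definition supersymmetric :: "nat set \<Rightarrow> bool" where
  "supersymmetric S \<longleftrightarrow> additive S \<and>
     (\<forall>i j. i + j = mult S - 1 \<longrightarrow>
        apw S i + apw S j = apw S (mult S - 1) \<and>
        ord (apw S i) S + ord (apw S j) S = ord (apw S (mult S - 1)) S)"

text \<open>Blowup data D: the generator e is sent to e, each other minimal generator a_i to d_i = a_i - e.
  Tuples are indexed by the minimal generators of S (so repeated values d_i are counted separately).\<close>
definition blowD :: "nat set \<Rightarrow> nat \<Rightarrow> nat" where
  "blowD S a = (if a = mult S then mult S else a - mult S)"

definition blowup :: "nat set \<Rightarrow> nat set" where
  "blowup S = {b. \<exists>x. (\<forall>a. a \<notin> min_gens S \<longrightarrow> x a = 0) \<and> (\<Sum>a\<in>min_gens S. x a * blowD S a) = b}"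

definition dD :: "nat \<Rightarrow> nat set \<Rightarrow> nat" where
  "dD b S = card {x. (\<forall>a. a \<notin> min_gens S \<longrightarrow> x a = 0) \<and> (\<Sum>a\<in>min_gens S. x a * blowD S a) = b}"

definition frob :: "nat set \<Rightarrow> int" where
  "frob B = (if B = UNIV then -1 else int (Max (UNIV - B)))"

end

theory Submission
  imports Defs
begin

text \<open>Every minimal generator a \<noteq> e is e + d_a, so an S-factorization c of n satisfies
n = e |c| + \<Sigma>_{a \<noteq> e} c_a d_a. Deleting the e-coordinate therefore maps the factorizations
of maximal length of n injectively into the representations of the residue r(n) = n - e ord(n)
by the d_a alone, and since additivity gives ord(n + k e) = ord(n) + k, the map is onto for
n + k e with k large. Supersymmetry pairs the Apery set so that r(w) + r(w') = r(w_{e-1}) =: M,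
and adding a fixed representation is injective, so these counts are maximal at M. Additivity
also shows r(n) - e \<notin> B; hence M - e \<notin> B, no representation of M uses e, and, every residue
class mod e being attained by some r(n) \<le> M, M - e = F(B).\<close>

lemma finite_bounded_funs:
  assumes "finite A"
  shows "finite {c :: 'a \<Rightarrow> nat. (\<forall>a. a \<notin> A \<longrightarrow> c a = 0) \<and> (\<forall>a. c a \<le> n)}"
  by (rule finite_subset[OF _ finite_set_of_finite_funs[OF assms finite_atMost[of n], where d=0]]) auto

lemma mod_eq_imp_le:
  fixes a b e :: nat
  assumes "a mod e = b mod e" and "a < b + e"
  shows "a \<le> b"
proof (rule ccontr)
  assume "\<not> a \<le> b"
  then have "e dvd a - b" and "0 < a - b"
    using assms(1) mod_eq_dvd_iff_nat[of b a e] by auto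
  then have "e \<le> a - b" by (rule dvd_imp_le)
  then show False using assms(2) \<open>\<not> a \<le> b\<close> by linarith
qed

locale num_semigroup =
  fixes S :: "nat set"
  assumes numerical_semigroup: "numerical_semigroup S"
begin

lemma zero_mem: "0 \<in> S"
  and add_mem: "x \<in> S \<Longrightarrow> y \<in> S \<Longrightarrow> x + y \<in> S"
  and finite_gaps: "finite (UNIV - S)"
  using numerical_semigroup unfolding numerical_semigroup_def by blast+

lemma mult_mem: "x \<in> S \<Longrightarrow> k * x \<in> S"
  by (induction k) (auto simp: zero_mem add_mem)

lemma sum_mem: "(\<And>a. a \<in> A \<Longrightarrow> f a \<in> S) \<Longrightarrow> sum f A \<in> S"
  by (induction A rule: infinite_finite_induct) (auto simp: zero_mem add_mem)

lemma eventually_mem: "\<exists>N. \<forall>n\<ge>N. n \<in> S"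
proof -
  obtain N where "UNIV - S \<subseteq> {..<N}"
    using finite_gaps by (auto simp: finite_nat_set_iff_bounded)
  then show ?thesis by (intro exI[of _ N]) auto
qed

definition e :: nat where "e = (LEAST x. x \<in> S \<and> x \<noteq> 0)"

lemma e_mem: "e \<in> S" and e_pos: "0 < e"
proof -
  obtain N where "\<forall>n\<ge>N. n \<in> S" using eventually_mem by blast
  then have "Suc N \<in> S \<and> Suc N \<noteq> 0" by simp
  then have "e \<in> S \<and> e \<noteq> 0" unfolding e_def by (rule LeastI)
  then show "e \<in> S" "0 < e" by auto
qed

lemma e_le: "x \<in> S \<Longrightarrow> x \<noteq> 0 \<Longrightarrow> e \<le> x"
  unfolding e_def by (rule Least_le) simp

lemma add_mult_e_mem: "u \<in> S \<Longrightarrow> u + k * e \<in> S"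
  using add_mem mult_mem e_mem by blast

lemma eventually_add_mult_e_mem: "\<exists>N. \<forall>z. z + N * e \<in> S"
proof -
  obtain N where N: "\<forall>n\<ge>N. n \<in> S" using eventually_mem by blast
  have "N \<le> z + N * e" for z using e_pos by (simp add: trans_le_add2)
  then show ?thesis using N by blast
qed

subsection \<open>Minimal generators and factorizations\<close>

lemma min_gens_mem: "a \<in> min_gens S \<Longrightarrow> a \<in> S"
  unfolding min_gens_def by auto

lemma e_le_min_gens: "a \<in> min_gens S \<Longrightarrow> e \<le> a"
  unfolding min_gens_def using e_le by auto

lemma e_min_gens: "e \<in> min_gens S"
  using e_mem e_pos e_le unfolding min_gens_def by fastforce

lemma min_gens_diff_e_notin: "a \<in> min_gens S \<Longrightarrow> a \<noteq> e \<Longrightarrow> a - e \<notin> S"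
proof
  assume a: "a \<in> min_gens S" "a \<noteq> e" "a - e \<in> S"
  then have "a = e + (a - e)" "a - e \<noteq> 0" using e_le_min_gens by fastforce+
  then show False using a e_mem e_pos unfolding min_gens_def by blast
qed

lemma finite_min_gens: "finite (min_gens S)"
proof (rule finite_subset)
  show "min_gens S \<subseteq> insert e ((+) e ` (UNIV - S))"
  proof
    fix a assume a: "a \<in> min_gens S"
    then show "a \<in> insert e ((+) e ` (UNIV - S))"
      using min_gens_diff_e_notin[OF a] e_le_min_gens[OF a]
      by (cases "a = e") (auto intro!: image_eqI[of _ _ "a - e"])
  qed
  show "finite (insert e ((+) e ` (UNIV - S)))" using finite_gaps by simp
qed

lemma single_gen_fact:
  assumes "a \<in> min_gens S"
  shows "(\<lambda>b. if b = a then k else 0) \<in> facts S (k * a)"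
    and "flen S (\<lambda>b. if b = a then k else 0) = k"
  using assms finite_min_gens
  by (auto simp: facts_def flen_def if_distrib[of "\<lambda>v. v * _"] sum.delta cong: if_cong)

lemma facts_nonempty: "n \<in> S \<Longrightarrow> facts S n \<noteq> {}"
proof (induction n rule: less_induct)
  case (less n)
  consider "n = 0" | "n \<in> min_gens S"
    | x y where "x \<in> S" "y \<in> S" "x \<noteq> 0" "y \<noteq> 0" "n = x + y"
    using less.prems unfolding min_gens_def by blast
  then show ?case
  proof cases
    case 1
    then show ?thesis by (auto simp: facts_def intro!: exI[of _ "\<lambda>_. 0"])
  next
    case 2
    then show ?thesis using single_gen_fact(1)[of n 1] by auto
  next
    case (3 x y)
    then obtain cx cy where "cx \<in> facts S x" "cy \<in> facts S y"
      using less.IH[of x] less.IH[of y] by auto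
    then have "(\<lambda>a. cx a + cy a) \<in> facts S n"
      using 3 by (auto simp: facts_def sum.distrib algebra_simps)
    then show ?thesis by blast
  qed
qed

lemma facts_imp_mem: "c \<in> facts S n \<Longrightarrow> n \<in> S"
  using sum_mem[of "min_gens S" "\<lambda>a. c a * a"] mult_mem min_gens_mem
  unfolding facts_def by auto

lemma e_flen_le: "c \<in> facts S n \<Longrightarrow> e * flen S c \<le> n"
proof -
  assume c: "c \<in> facts S n"
  have "e * flen S c = (\<Sum>a\<in>min_gens S. c a * e)"
    by (simp add: flen_def sum_distrib_left mult.commute)
  also have "\<dots> \<le> (\<Sum>a\<in>min_gens S. c a * a)"
    by (intro sum_mono mult_le_mono2 e_le_min_gens)
  finally show ?thesis using c by (simp add: facts_def)
qed

lemma finite_facts: "finite (facts S n)"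
proof (rule finite_subset[OF _ finite_bounded_funs[OF finite_min_gens, of n]])
  have "c a \<le> n" if c: "c \<in> facts S n" for c a
  proof -
    have "c a \<le> flen S c"
      using c finite_min_gens member_le_sum[of a "min_gens S" c]
      by (cases "a \<in> min_gens S") (auto simp: facts_def flen_def)
    also have "\<dots> \<le> e * flen S c" using e_pos by simp
    finally show ?thesis using e_flen_le[OF c] by simp
  qed
  then show "facts S n \<subseteq> {c. (\<forall>a. a \<notin> min_gens S \<longrightarrow> c a = 0) \<and> (\<forall>a. c a \<le> n)}"
    by (auto simp: facts_def)
qed

lemma flen_le_ord: "c \<in> facts S n \<Longrightarrow> flen S c \<le> ord n S"
  unfolding ord_def by (rule Max_ge) (auto simp: finite_facts)

lemma ord_attained: "n \<in> S \<Longrightarrow> \<exists>c\<in>facts S n. flen S c = ord n S"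
  unfolding ord_def using facts_nonempty finite_facts
  by (metis Max_in finite_imageI image_iff image_is_empty)

lemma ord_notin: "n \<notin> S \<Longrightarrow> ord n S = Max {}"
  unfolding ord_def using facts_imp_mem by (metis equals0I image_empty)

lemma e_ord_le: "n \<in> S \<Longrightarrow> e * ord n S \<le> n"
  using ord_attained e_flen_le by fastforce

lemma ord_mult_e: "ord (k * e) S = k"
proof (rule antisym)
  show "k \<le> ord (k * e) S"
    using flen_le_ord single_gen_fact[OF e_min_gens, of k] by metis
  have "e * ord (k * e) S \<le> e * k"
    using e_ord_le[of "k * e"] mult_mem[OF e_mem] by (simp add: mult.commute)
  then show "ord (k * e) S \<le> k" using e_pos by simp
qed

lemma ord_0: "ord 0 S = 0"
  using ord_mult_e[of 0] by simp

definition residue :: "nat \<Rightarrow> nat" where "residue n = n - e * ord n S"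

lemma residue_eq: "n \<in> S \<Longrightarrow> n = residue n + e * ord n S"
  unfolding residue_def using e_ord_le by simp

lemma residue_mod: "n \<in> S \<Longrightarrow> residue n mod e = n mod e"
  using arg_cong[where f = "\<lambda>x. x mod e", OF residue_eq] by simp

subsection \<open>The Apery set\<close>

lemma Apery_mem: "w \<in> Apery S e \<Longrightarrow> w \<in> S"
  unfolding Apery_def by auto

lemma Apery_decomp: "n \<in> S \<Longrightarrow> \<exists>w\<in>Apery S e. \<exists>k. n = w + k * e"
proof (induction n rule: less_induct)
  case (less n)
  show ?case
  proof (cases "n \<in> Apery S e")
    case True
    then show ?thesis by (intro bexI[of _ n] exI[of _ 0]) auto
  next
    case False
    then have "e \<le> n" "n - e \<in> S"
      using less.prems unfolding Apery_def by auto
    moreover have "n - e < n" using \<open>e \<le> n\<close> e_pos by simp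
    ultimately
    obtain w k where "w \<in> Apery S e" "n - e = w + k * e" using less.IH by blast
    then show ?thesis using \<open>e \<le> n\<close> by (intro bexI[of _ w] exI[of _ "Suc k"]) auto
  qed
qed

lemma inj_on_mod_Apery: "inj_on (\<lambda>w. w mod e) (Apery S e)"
proof -
  have "w = w'" if w: "w \<in> Apery S e" "w' \<in> Apery S e" and eq: "w mod e = w' mod e"
    and le: "w \<le> w'" for w w'
  proof (rule ccontr)
    assume "w \<noteq> w'"
    obtain q where q: "w' - w = e * q" using le eq mod_eq_dvd_iff_nat[of w w' e] by auto
    then obtain k where "q = Suc k" using \<open>w \<noteq> w'\<close> le by (cases q) auto
    then have "e \<le> w'" "w' - e = w + k * e" using q le by (auto simp: algebra_simps)
    then show False using w add_mult_e_mem[OF Apery_mem[OF w(1)], of k]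
      unfolding Apery_def by auto
  qed
  then show ?thesis by (intro inj_onI) (metis nle_le)
qed

lemma mod_Apery_image: "(\<lambda>w. w mod e) ` Apery S e = {..<e}"
proof
  show "(\<lambda>w. w mod e) ` Apery S e \<subseteq> {..<e}" using e_pos by auto
  show "{..<e} \<subseteq> (\<lambda>w. w mod e) ` Apery S e"
  proof
    fix z assume z: "z \<in> {..<e}"
    obtain N where "z + N * e \<in> S" using eventually_add_mult_e_mem by blast
    then obtain w k where "w \<in> Apery S e" "z + N * e = w + k * e" using Apery_decomp by blast
    then show "z \<in> (\<lambda>w. w mod e) ` Apery S e" using z by (metis lessThan_iff mod_less mod_mult_self1 image_eqI)
  qed
qed

lemma finite_Apery: "finite (Apery S e)"
  using inj_on_finite[OF inj_on_mod_Apery] mod_Apery_image by auto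

lemma card_Apery: "card (Apery S e) = e"
  using card_image[OF inj_on_mod_Apery] mod_Apery_image by simp

end

locale additive_num_semigroup = num_semigroup +
  assumes additive: "additive S"
begin

text \<open>mult S is Min of the infinite set S - {0}, which is unspecified, so mult S = e has to
be derived from additivity. Whether mult S \<in> S is not known a priori either; it follows because
ord takes the same junk value Max {} at all non-members of S.\<close>

lemma mult_eq: "mult S = e"
proof -
  define c where "c = mult S"
  have ord_add_c: "ord (u + c) S = ord u S + 1" if "u \<in> S" for u
    using additive that unfolding additive_def c_def by blast
  have ord_c: "ord c S = 1" using ord_add_c[OF zero_mem] ord_0 by simp
  have "e + k * c \<in> S \<and> ord (e + k * c) S = k + 1" for k
  proof (induction k)
    case 0
    show ?case using e_mem ord_mult_e[of 1] by simp
  next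
    case (Suc k)
    then have ord_Suc: "ord (e + k * c + c) S = k + 2" using ord_add_c by simp
    have "e + k * c + c \<in> S"
    proof (rule ccontr)
      assume notin: "e + k * c + c \<notin> S"
      then have "c \<notin> S" using Suc add_mem by blast
      then show False using notin ord_Suc ord_c by (simp add: ord_notin)
    qed
    then show ?case using ord_Suc by (simp add: ac_simps)
  qed
  from this[of e] have "ord ((c + 1) * e) S = e + 1" by (simp add: algebra_simps)
  then show ?thesis using ord_mult_e[of "c + 1"] unfolding c_def by simp
qed

lemma ord_add_mult_e: "u \<in> S \<Longrightarrow> ord (u + k * e) S = ord u S + k"
proof (induction k)
  case (Suc k)
  then have "ord (u + k * e + e) S = ord (u + k * e) S + 1"
    using additive add_mult_e_mem[of u k] unfolding additive_def mult_eq by blast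
  then show ?case using Suc by (simp add: ac_simps)
qed simp

lemma residue_add_mult_e: "u \<in> S \<Longrightarrow> residue (u + k * e) = residue u"
  unfolding residue_def using ord_add_mult_e[of u k] e_ord_le[of u] by (simp add: algebra_simps)

subsection \<open>Representations in the blowup\<close>

lemma blowD_eq: "blowD S a = (if a = e then e else a - e)"
  unfolding blowD_def mult_eq ..

lemma blowD_pos: "a \<in> min_gens S \<Longrightarrow> 0 < blowD S a"
  using e_le_min_gens[of a] e_pos by (auto simp: blowD_eq)

definition blowup_reps :: "nat \<Rightarrow> (nat \<Rightarrow> nat) set" where
  "blowup_reps b = {x. (\<forall>a. a \<notin> min_gens S \<longrightarrow> x a = 0) \<and> (\<Sum>a\<in>min_gens S. x a * blowD S a) = b}"

definition reduced_reps :: "nat \<Rightarrow> (nat \<Rightarrow> nat) set" where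
  "reduced_reps b = {x \<in> blowup_reps b. x e = 0}"

lemma dD_eq_card_blowup_reps: "dD b S = card (blowup_reps b)"
  unfolding dD_def blowup_reps_def ..

lemma mem_blowup_iff: "b \<in> blowup S \<longleftrightarrow> blowup_reps b \<noteq> {}"
  unfolding blowup_def blowup_reps_def by auto

lemma blowup_reps_le: "x \<in> blowup_reps b \<Longrightarrow> x a \<le> b"
proof (cases "a \<in> min_gens S")
  case True
  assume x: "x \<in> blowup_reps b"
  have "x a \<le> x a * blowD S a" using blowD_pos[OF True] by simp
  also have "\<dots> \<le> (\<Sum>a\<in>min_gens S. x a * blowD S a)"
    using True finite_min_gens by (intro member_le_sum) auto
  finally show ?thesis using x by (simp add: blowup_reps_def)
qed (simp add: blowup_reps_def)

lemma finite_blowup_reps: "finite (blowup_reps b)"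
  by (rule finite_subset[OF _ finite_bounded_funs[OF finite_min_gens, of b]])
    (auto simp: blowup_reps_le, simp add: blowup_reps_def)

lemma finite_reduced_reps: "finite (reduced_reps b)"
  using finite_blowup_reps unfolding reduced_reps_def by simp

lemma sum_min_gens_split_e:
  assumes "g e 0 = 0"
  shows "(\<Sum>a\<in>min_gens S. g a (x a)) = g e (x e) + (\<Sum>a\<in>min_gens S. g a ((x(e := 0)) a))"
proof -
  have "(\<Sum>a\<in>min_gens S - {e}. g a (x a)) = (\<Sum>a\<in>min_gens S - {e}. g a ((x(e := 0)) a))"
    by (rule sum.cong) auto
  then show ?thesis
    using assms sum.remove[OF finite_min_gens e_min_gens, of "\<lambda>a. g a (x a)"]
      sum.remove[OF finite_min_gens e_min_gens, of "\<lambda>a. g a ((x(e := 0)) a)"] by simp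
qed

lemma flen_split_e: "flen S c = c e + flen S (c(e := 0))"
  unfolding flen_def using sum_min_gens_split_e[of "\<lambda>a v. v" c] by simp

lemma sum_blowD_split_e:
  "(\<Sum>a\<in>min_gens S. x a * blowD S a) = x e * e + (\<Sum>a\<in>min_gens S. (x(e := 0)) a * blowD S a)"
  using sum_min_gens_split_e[of "\<lambda>a v. v * blowD S a" x] by (simp add: blowD_eq)

lemma sum_min_gens_decomp:
  "(\<Sum>a\<in>min_gens S. c a * a) = e * flen S c + (\<Sum>a\<in>min_gens S. (c(e := 0)) a * blowD S a)"
proof -
  have "c a * a = e * c a + (c(e := 0)) a * blowD S a" if "a \<in> min_gens S" for a
    using e_le_min_gens[OF that] by (cases "a = e") (auto simp: blowD_eq algebra_simps diff_mult_distrib2)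
  then show ?thesis by (simp add: flen_def sum.distrib sum_distrib_left cong: sum.cong)
qed

lemma drop_e_reduced_rep:
  assumes "c \<in> facts S n" "flen S c = ord n S"
  shows "c(e := 0) \<in> reduced_reps (residue n)"
proof -
  have "n = e * ord n S + (\<Sum>a\<in>min_gens S. (c(e := 0)) a * blowD S a)"
    using sum_min_gens_decomp[of c] assms by (simp add: facts_def)
  then show ?thesis
    using assms(1) by (auto simp: reduced_reps_def blowup_reps_def facts_def residue_def)
qed

lemma reduced_reps_residue_nonempty: "n \<in> S \<Longrightarrow> reduced_reps (residue n) \<noteq> {}"
  using ord_attained drop_e_reduced_rep by blast

lemma dmax_at_le_card_reduced_reps: "dmax_at n S \<le> card (reduced_reps (residue n))"
proof -
  let ?A = "{c \<in> facts S n. flen S c = ord n S}"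
  have "inj_on (\<lambda>c. c(e := 0)) ?A"
  proof (rule inj_onI)
    fix c c' assume "c \<in> ?A" "c' \<in> ?A" and eq: "c(e := 0) = c'(e := 0)"
    then have "c e = c' e" using flen_split_e[of c] flen_split_e[of c'] by simp
    then show "c = c'" using eq by (metis fun_upd_triv fun_upd_upd)
  qed
  moreover have "(\<lambda>c. c(e := 0)) ` ?A \<subseteq> reduced_reps (residue n)"
    using drop_e_reduced_rep by blast
  ultimately show ?thesis
    unfolding dmax_at_def using finite_reduced_reps by (intro card_inj_on_le) auto
qed

text \<open>The lower bound on k makes the number ord(n + k e) - |x| of copies of e padded to a
reduced representation x nonnegative.\<close>

lemma dmax_at_add_mult_e:
  assumes n: "n \<in> S" and k: "card (min_gens S) * residue n \<le> k"
  shows "dmax_at (n + k * e) S = card (reduced_reps (residue n))"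
proof (rule antisym)
  define n' where "n' = n + k * e"
  define L where "L = ord n' S"
  have n': "n' \<in> S" "residue n' = residue n" "L = ord n S + k"
    using add_mult_e_mem[OF n] residue_add_mult_e[OF n] ord_add_mult_e[OF n]
    unfolding n'_def L_def by auto
  show "dmax_at (n + k * e) S \<le> card (reduced_reps (residue n))"
    using dmax_at_le_card_reduced_reps[of n'] n' by (simp add: n'_def)
  define pad where "pad x = x(e := L - flen S x)" for x :: "nat \<Rightarrow> nat"
  have pad_drop: "(pad x)(e := 0) = x" if "x \<in> reduced_reps (residue n)" for x
    using that unfolding pad_def reduced_reps_def by auto
  have "pad x \<in> {c \<in> facts S n'. flen S c = ord n' S}" if x: "x \<in> reduced_reps (residue n)" for x
  proof -
    have "flen S x \<le> card (min_gens S) * residue n"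
      unfolding flen_def using x blowup_reps_le sum_bounded_above[of "min_gens S" x "residue n"]
      by (simp add: reduced_reps_def)
    then have fl: "flen S (pad x) = L"
      using flen_split_e[of "pad x"] pad_drop[OF x] k n'(3) by (simp add: pad_def)
    have "(\<Sum>a\<in>min_gens S. pad x a * a) = e * L + residue n"
      using sum_min_gens_decomp[of "pad x"] fl pad_drop[OF x] x
      by (simp add: reduced_reps_def blowup_reps_def)
    also have "\<dots> = n'" using residue_eq[OF n'(1)] n'(2) unfolding L_def by linarith
    finally have "pad x \<in> facts S n'"
      using x e_min_gens by (auto simp: facts_def pad_def reduced_reps_def blowup_reps_def)
    then show ?thesis using fl by (simp add: L_def)
  qed
  moreover have "inj_on pad (reduced_reps (residue n))" using pad_drop by (metis inj_onI)
  ultimately show "card (reduced_reps (residue n)) \<le> dmax_at (n + k * e) S"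
    unfolding dmax_at_def n'_def using finite_facts by (intro card_inj_on_le) auto
qed

text \<open>Adding one e to a representation of r(n) - e gives a factorization of r(n) + e q,
with q the number of its parts d_a, of length larger than q; adding ord(n) more copies of e
would then make ord(n + q e) exceed ord(n) + q.\<close>

lemma residue_minus_e_notin_blowup:
  assumes n: "n \<in> S" and e_le: "e \<le> residue n"
  shows "residue n - e \<notin> blowup S"
proof
  assume "residue n - e \<in> blowup S"
  then obtain x where x: "x \<in> blowup_reps (residue n - e)" by (auto simp: mem_blowup_iff)
  define c where "c = x(e := x e + 1)"
  define q where "q = flen S (x(e := 0))"
  define r0 where "r0 = (\<Sum>a\<in>min_gens S. (x(e := 0)) a * blowD S a)"
  have c_drop: "c(e := 0) = x(e := 0)" by (simp add: c_def)
  have flen_c: "flen S c = x e + 1 + q"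
    using flen_split_e[of c] c_drop by (simp add: c_def q_def)
  have x_sum: "residue n - e = x e * e + r0"
    using sum_blowD_split_e[of x] x by (simp add: blowup_reps_def r0_def)
  have "(\<Sum>a\<in>min_gens S. c a * a) = e * flen S c + r0"
    using sum_min_gens_decomp[of c] c_drop by (simp add: r0_def)
  also have "\<dots> = residue n + e * q" using flen_c x_sum e_le by (simp add: algebra_simps)
  finally have c_fact: "c \<in> facts S (residue n + e * q)"
    using x e_min_gens by (auto simp: facts_def c_def blowup_reps_def)
  then have mem: "residue n + e * q \<in> S" by (rule facts_imp_mem)
  have eq: "n + q * e = residue n + e * q + ord n S * e"
    using residue_eq[OF n] mult.commute[of q e] mult.commute[of "ord n S" e] by linarith
  have "ord (residue n + e * q + ord n S * e) S = ord n S + q"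
    using ord_add_mult_e[OF n, of q] unfolding eq .
  then have "ord (residue n + e * q) S = q" using ord_add_mult_e[OF mem, of "ord n S"] by simp
  then show False using flen_le_ord[OF c_fact] flen_c by simp
qed

lemma card_reduced_reps_mono:
  assumes "reduced_reps z \<noteq> {}"
  shows "card (reduced_reps y) \<le> card (reduced_reps (y + z))"
proof -
  obtain t where t: "t \<in> reduced_reps z" using assms by blast
  have "(\<lambda>x a. x a + t a) ` reduced_reps y \<subseteq> reduced_reps (y + z)"
    using t by (auto simp: reduced_reps_def blowup_reps_def sum.distrib add_mult_distrib)
  moreover have "inj_on (\<lambda>x a. x a + t a) (reduced_reps y)"
    by (rule inj_onI) (metis add_right_cancel ext)
  ultimately show ?thesis using finite_reduced_reps by (intro card_inj_on_le) auto
qed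

lemma add_mult_e_mem_blowup:
  assumes "b \<in> blowup S"
  shows "b + j * e \<in> blowup S"
proof -
  obtain x where x: "x \<in> blowup_reps b" using assms by (auto simp: mem_blowup_iff)
  have "x(e := x e + j) \<in> blowup_reps (b + j * e)"
    using x e_min_gens sum_blowD_split_e[of x] sum_blowD_split_e[of "x(e := x e + j)"]
    by (auto simp: blowup_reps_def algebra_simps)
  then show ?thesis by (auto simp: mem_blowup_iff)
qed

lemma residue_mem_blowup: "n \<in> S \<Longrightarrow> residue n \<in> blowup S"
  using reduced_reps_residue_nonempty by (auto simp: mem_blowup_iff reduced_reps_def)

lemma blowup_reps_eq_reduced_reps:
  assumes "e \<le> b \<Longrightarrow> b - e \<notin> blowup S"
  shows "blowup_reps b = reduced_reps b"
proof -
  have "x e = 0" if x: "x \<in> blowup_reps b" for x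
  proof (rule ccontr)
    assume "x e \<noteq> 0"
    then obtain k where k: "x e = Suc k" using not0_implies_Suc by blast
    have "b = x e * e + (\<Sum>a\<in>min_gens S. (x(e := 0)) a * blowD S a)"
      using sum_blowD_split_e[of x] x by (simp add: blowup_reps_def)
    then have "e \<le> b" "x(e := k) \<in> blowup_reps (b - e)"
      using x k e_min_gens sum_blowD_split_e[of "x(e := k)"] by (auto simp: blowup_reps_def)
    then show False using assms by (auto simp: mem_blowup_iff)
  qed
  then show ?thesis by (auto simp: reduced_reps_def)
qed

end

locale supersymmetric_num_semigroup = additive_num_semigroup +
  assumes supersymmetric: "supersymmetric S"
begin

lemma apw_mem: "i < e \<Longrightarrow> apw S i \<in> Apery S e"
  unfolding apw_def mult_eq using finite_Apery card_Apery
  by (metis length_sorted_list_of_set nth_mem set_sorted_list_of_set)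

lemma apw_surj: "w \<in> Apery S e \<Longrightarrow> \<exists>i<e. apw S i = w"
  unfolding apw_def mult_eq using finite_Apery card_Apery
  by (metis in_set_conv_nth length_sorted_list_of_set set_sorted_list_of_set)

definition rmax :: nat where "rmax = residue (apw S (e - 1))"

lemma residue_complement: "n \<in> S \<Longrightarrow> \<exists>v\<in>S. residue n + residue v = rmax"
proof -
  assume n: "n \<in> S"
  obtain w k where w: "w \<in> Apery S e" and n_eq: "n = w + k * e" using Apery_decomp[OF n] by blast
  obtain i where i: "i < e" "apw S i = w" using apw_surj[OF w] by blast
  define v where "v = apw S (e - 1 - i)"
  have "i + (e - 1 - i) = mult S - 1" using i by (simp add: mult_eq)
  then have pair: "w + v = apw S (e - 1)" "ord w S + ord v S = ord (apw S (e - 1)) S"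
    using supersymmetric i unfolding supersymmetric_def mult_eq v_def by auto
  have "w \<in> S" "v \<in> S" using w apw_mem[of "e - 1 - i"] e_pos Apery_mem unfolding v_def by auto
  then have "residue w + residue v = rmax"
    unfolding rmax_def residue_def pair(2)[symmetric] unfolding pair(1)[symmetric] distrib_left
    using e_ord_le[of w] e_ord_le[of v] by linarith
  moreover have "residue n = residue w" using residue_add_mult_e \<open>w \<in> S\<close> n_eq by simp
  ultimately show ?thesis using \<open>v \<in> S\<close> by auto
qed

lemma residue_le_rmax: "n \<in> S \<Longrightarrow> residue n \<le> rmax"
  using residue_complement by fastforce

lemma dmax_at_le_card_rmax: "n \<in> S \<Longrightarrow> dmax_at n S \<le> card (reduced_reps rmax)"
proof -
  assume n: "n \<in> S"
  obtain v where v: "v \<in> S" "residue n + residue v = rmax" using residue_complement[OF n] by blast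
  have "dmax_at n S \<le> card (reduced_reps (residue n))" by (rule dmax_at_le_card_reduced_reps)
  also have "\<dots> \<le> card (reduced_reps rmax)"
    using card_reduced_reps_mono reduced_reps_residue_nonempty[OF v(1)] v(2) by metis
  finally show ?thesis .
qed

lemma dmax_at_rmax_attained: "\<exists>n\<in>S. dmax_at n S = card (reduced_reps rmax)"
proof -
  define w where "w = apw S (e - 1)"
  define k where "k = card (min_gens S) * residue w"
  have w: "w \<in> S" using apw_mem Apery_mem e_pos unfolding w_def by simp
  then have "dmax_at (w + k * e) S = card (reduced_reps rmax)"
    using dmax_at_add_mult_e[OF w] unfolding k_def rmax_def w_def by simp
  then show ?thesis using add_mult_e_mem[OF w] by blast
qed

lemma mem_blowup_above_rmax:
  assumes "rmax < z + e"
  shows "z \<in> blowup S"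
proof -
  obtain N where "z + N * e \<in> S" using eventually_add_mult_e_mem by blast
  define n where "n = z + N * e"
  have n: "n \<in> S" using \<open>z + N * e \<in> S\<close> by (simp add: n_def)
  have md: "residue n mod e = z mod e" using residue_mod[OF n] by (simp add: n_def)
  then have le: "residue n \<le> z"
    using mod_eq_imp_le residue_le_rmax[OF n] assms by (meson le_less_trans)
  obtain j where "z - residue n = e * j"
    using mod_eq_dvd_iff_nat[OF le, THEN iffD1, OF md[symmetric]] by (rule dvdE)
  then have "z = residue n + j * e" using le mult.commute[of e j] by linarith
  then show ?thesis using add_mult_e_mem_blowup[OF residue_mem_blowup[OF n]] by simp
qed

lemma rmax_minus_e_notin_blowup: "e \<le> rmax \<Longrightarrow> rmax - e \<notin> blowup S"
  using residue_minus_e_notin_blowup apw_mem Apery_mem e_pos unfolding rmax_def by simp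

lemma pred_e_le_rmax: "e - 1 \<le> rmax"
proof -
  obtain N where "e - 1 + N * e \<in> S" using eventually_add_mult_e_mem by blast
  moreover have "(e - 1 + N * e) mod e = e - 1"
    unfolding mod_mult_self1 using e_pos by simp
  ultimately have "residue (e - 1 + N * e) mod e = e - 1" using residue_mod by simp
  then have "e - 1 \<le> residue (e - 1 + N * e)" by (metis mod_less_eq_dividend)
  then show ?thesis using residue_le_rmax \<open>e - 1 + N * e \<in> S\<close> by (meson le_trans)
qed

lemma frob_blowup_add_e: "nat (frob (blowup S) + int e) = rmax"
proof (cases "e \<le> rmax")
  case True
  have gap: "rmax - e \<in> UNIV - blowup S" using rmax_minus_e_notin_blowup[OF True] by simp
  have le: "z \<le> rmax - e" if "z \<in> UNIV - blowup S" for z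
    using mem_blowup_above_rmax[of z] that by fastforce
  then have "finite (UNIV - blowup S)" by (meson finite_atMost finite_subset subsetI atMost_iff)
  then have "Max (UNIV - blowup S) = rmax - e" using le gap by (intro Max_eqI)
  moreover have "blowup S \<noteq> UNIV" using gap by auto
  ultimately show ?thesis using True by (simp add: frob_def)
next
  case False
  then have "blowup S = UNIV" using mem_blowup_above_rmax by force
  moreover have "rmax = e - 1" using False pred_e_le_rmax by simp
  ultimately show ?thesis using e_pos by (simp add: frob_def)
qed

lemma dD_rmax: "dD rmax S = card (reduced_reps rmax)"
  using blowup_reps_eq_reduced_reps rmax_minus_e_notin_blowup
  by (simp add: dD_eq_card_blowup_reps)

end

theorem theorem4p12:
  fixes S :: "nat set"
  assumes "numerical_semigroup S" and "supersymmetric S"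
  shows "(\<exists>n\<in>S. dmax_at n S = dD (nat (frob (blowup S) + int (mult S))) S)
    \<and> (\<forall>n\<in>S. dmax_at n S \<le> dD (nat (frob (blowup S) + int (mult S))) S)"
proof -
  interpret supersymmetric_num_semigroup S
    using assms by unfold_locales (auto simp: supersymmetric_def)
  have "nat (frob (blowup S) + int (mult S)) = rmax"
    using frob_blowup_add_e by (simp add: mult_eq)
  then show ?thesis using dmax_at_rmax_attained dmax_at_le_card_rmax dD_rmax by simp
qed

end
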